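(* Let $E_1,E_2,E_3$ be pairwise disjoint (possibly empty) sets of edges on $\gamma_2$ with vertices in $[n]$. Suppose the edges of $E_1\cup E_2\cup E_3$ can be linearly ordered as $e_1,\dots,e_m$ such that: edges of $E_i$ come before edges of $E_j$ whenever $i<j$; for all $1\le i<j\le m$, either $e_i<_3e_j$ or $e_i$ and $e_j$ do not cross; and the edges of $E_2$ are pairwise non-crossing. Then there is a triangulation $T\in S(n,2)$ such that $e\le_3T$ for every $e\in E_1$, $e\in T$ for every $e\in E_2$, and $e\ge_3T$ (i.e. $T\le_3 e$) for every $e\in E_3$.
   Context: $\gamma_d=\{(t,t^2,\dots,t^d):t\in\mathbb{R}\}$. Fix $t_1<\dots<t_n$ and points $\gamma_2(t_i)$ identified with $i\in[n]$; $C(n,2)$ is their convex hull and $S(n,2)$ the set of triangulations of $C(n,2)$ with vertices in $[n]$. An edge is a 2-subset of $[n]$ identified with the segment it spans; two edges cross (overlap) if their segments meet outside their common vertices. For a simplex $\alpha\subseteq[n]$, $h_\alpha:\mathrm{conv}(\alpha)\to\mathbb{R}$ gives the last coordinate of the point of the convex hull of $\{\gamma_3(t_i):i\in\alpha\}$ projecting to $p$. $\alpha<_3\beta$ means $\alpha,\beta$ overlap and $h_\alpha\le h_\beta$ on $\mathrm{conv}(\alpha)\cap\mathrm{conv}(\beta)$. For $T\in S(n,2)$, $h_T(p)=h_\rho(p)$ for $p\in\mathrm{conv}(\rho)$, $\rho\in T$; $e\le_3T$ means $h_e\le h_T$ on $\mathrm{conv}(e)$, and $T\le_3e$ means $h_T\le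 h_e$ on $\mathrm{conv}(e)$. *)

theory Defs
  imports "HOL-Analysis.Analysis"
begin

text \<open>The parameters are t 1 < ... < t n, the point
  labelled i is gamma2 (t i) in the plane real \<times> real; its lift is gamma3 (t i),
  represented in (real \<times> real) \<times> real so that fst is the projection to the plane
  and snd is the last coordinate.\<close>

definition gamma2 :: "real \<Rightarrow> real \<times> real" where
  "gamma2 s = (s, s^2)"

definition gamma3 :: "real \<Rightarrow> (real \<times> real) \<times> real" where
  "gamma3 s = ((s, s^2), s^3)"

definition cnv :: "(nat \<Rightarrow> real) \<Rightarrow> nat set \<Rightarrow> (real \<times> real) set" where
  "cnv t \<alpha> = convex hull ((\<lambda>i. gamma2 (t i)) ` \<alpha>)"

definition hgt :: "(nat \<Rightarrow> real) \<Rightarrow> nat set \<Rightarrow> real \<times> real \<Rightarrow> real" where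
  "hgt t \<alpha> p = (THE z. (p, z) \<in> convex hull ((\<lambda>i. gamma3 (t i)) ` \<alpha>))"

definition is_edge :: "nat \<Rightarrow> nat set \<Rightarrow> bool" where
  "is_edge n e \<longleftrightarrow> e \<subseteq> {1..n} \<and> card e = 2"

text \<open>Two simplices overlap (for edges: cross) if their convex hulls meet outside
  their common vertices.\<close>
definition overlap :: "(nat \<Rightarrow> real) \<Rightarrow> nat set \<Rightarrow> nat set \<Rightarrow> bool" where
  "overlap t \<alpha> \<beta> \<longleftrightarrow>
     (\<exists>p \<in> cnv t \<alpha> \<inter> cnv t \<beta>. p \<notin> (\<lambda>i. gamma2 (t i)) ` (\<alpha> \<inter> \<beta>))"

definition less3 :: "(nat \<Rightarrow> real) \<Rightarrow> nat set \<Rightarrow> nat set \<Rightarrow> bool" where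
  "less3 t \<alpha> \<beta> \<longleftrightarrow> overlap t \<alpha> \<beta> \<and>
     (\<forall>p \<in> cnv t \<alpha> \<inter> cnv t \<beta>. hgt t \<alpha> p \<le> hgt t \<beta> p)"

text \<open>S(n,2): triangulations of C(n,2) with vertices in [n], given by their set of
  maximal (full-dimensional) simplices: affinely independent, covering C(n,2), and
  intersecting properly (the intersection of two is a common face).\<close>
definition triangulation :: "nat \<Rightarrow> (nat \<Rightarrow> real) \<Rightarrow> nat set set \<Rightarrow> bool" where
  "triangulation n t T \<longleftrightarrow>
     (\<forall>\<rho>\<in>T. \<rho> \<subseteq> {1..n} \<and> card \<rho> = min n 3 \<and>
              \<not> affine_dependent ((\<lambda>i. gamma2 (t i)) ` \<rho>)) \<and>
     (\<Union>\<rho>\<in>T. cnv t \<rho>) = cnv t {1..n} \<and>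
     (\<forall>\<rho>\<in>T. \<forall>\<sigma>\<in>T. cnv t \<rho> \<inter> cnv t \<sigma> = cnv t (\<rho> \<inter> \<sigma>))"

definition edge_in :: "nat set \<Rightarrow> nat set set \<Rightarrow> bool" where
  "edge_in e T \<longleftrightarrow> (\<exists>\<rho>\<in>T. e \<subseteq> \<rho>)"

definition hT :: "(nat \<Rightarrow> real) \<Rightarrow> nat set set \<Rightarrow> real \<times> real \<Rightarrow> real" where
  "hT t T p = hgt t (SOME \<rho>. \<rho> \<in> T \<and> p \<in> cnv t \<rho>) p"

definition le3_edge_tri :: "(nat \<Rightarrow> real) \<Rightarrow> nat set \<Rightarrow> nat set set \<Rightarrow> bool" where
  "le3_edge_tri t e T \<longleftrightarrow> (\<forall>p \<in> cnv t e. hgt t e p \<le> hT t T p)"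

definition le3_tri_edge :: "(nat \<Rightarrow> real) \<Rightarrow> nat set set \<Rightarrow> nat set \<Rightarrow> bool" where
  "le3_tri_edge t T e \<longleftrightarrow> (\<forall>p \<in> cnv t e. hT t T p \<le> hgt t e p)"

end

theory Submission
  imports Defs
begin

text \<open>The points gamma2 (t i) are in convex position, so a triangulation of C(n,2) is a
  triangulation of the convex polygon 1, ..., n, and two edges cross exactly when their end
  points interleave, a < c < b < d. At the crossing point the lift of {a, b} lies below that
  of {c, d}, so the ordering hypothesis says: no edge of E2 or E3 passes below an edge of E1,
  no edge of E3 passes below an edge of E2, and E2 is non-crossing.

  Call a diagonal blocked if it passes below an edge of E1, above an edge of E3, or crosses an
  edge of E2. The edge {1, n} is not blocked, and whenever {i, j} is not blocked, the least m > i
  for which {m, j} is unblocked also leaves {i, m} unblocked. Recursing on both sides gives a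
  triangulation T without blocked edges, and it contains E2.

  Heights are compared with cubics. Over an edge {u, v}, the difference between the plane
  through a lifted triangle {a, b, c} of T and the lifted edge is an affine function whose
  value at a vertex s of the triangle is (s - u) (s - v) (s - w), for a parameter w that we
  may choose freely. Since no edge of the triangle passes below {u, v} if {u, v} is in E1,
  some w makes these three values nonnegative, and then the difference is nonnegative on the
  whole triangle. The case of E3 is symmetric.\<close>

section \<open>Affine functions over the parabola\<close>

definition aff :: "real \<Rightarrow> real \<Rightarrow> real \<Rightarrow> real \<times> real \<Rightarrow> real" where
  "aff c0 c1 c2 p = c0 + c1 * fst p + c2 * snd p"

lemma aff_gamma2 [simp]: "aff c0 c1 c2 (gamma2 s) = c0 + c1 * s + c2 * s^2"
  by (simp add: aff_def gamma2_def)

lemma aff_diff: "aff c0 c1 c2 p - aff d0 d1 d2 p = aff (c0 - d0) (c1 - d1) (c2 - d2) p"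
  by (simp add: aff_def algebra_simps)

lemma aff_minus: "- aff c0 c1 c2 p = aff (- c0) (- c1) (- c2) p"
  by (simp add: aff_def)

lemma aff_convex_combination:
  assumes "u + v = 1"
  shows "aff c0 c1 c2 (u *\<^sub>R p + v *\<^sub>R q) = u * aff c0 c1 c2 p + v * aff c0 c1 c2 q"
proof -
  have "c0 = u * c0 + v * c0" using assms by (metis distrib_right mult_1)
  then show ?thesis by (simp add: aff_def algebra_simps)
qed

lemma convex_aff_nonneg: "convex {p. 0 \<le> aff c0 c1 c2 p}"
proof -
  have "{p. 0 \<le> aff c0 c1 c2 p} = {p. inner (c1, c2) p \<ge> - c0}"
    by (auto simp: aff_def inner_prod_def)
  then show ?thesis by (simp add: convex_halfspace_ge)
qed

lemma cnv_mono: "\<alpha> \<subseteq> \<beta> \<Longrightarrow> cnv t \<alpha> \<subseteq> cnv t \<beta>"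
  unfolding cnv_def by (intro hull_mono image_mono)

lemma cnv_empty [simp]: "cnv t {} = {}"
  by (simp add: cnv_def)

lemma cnv_singleton [simp]: "cnv t {k} = {gamma2 (t k)}"
  by (simp add: cnv_def)

lemma cnv_pair: "cnv t {a, b} = closed_segment (gamma2 (t a)) (gamma2 (t b))"
  by (simp add: cnv_def segment_convex_hull)

lemma aff_nonneg_on_cnv:
  assumes "\<forall>k\<in>\<alpha>. 0 \<le> aff c0 c1 c2 (gamma2 (t k))" "p \<in> cnv t \<alpha>"
  shows "0 \<le> aff c0 c1 c2 p"
proof -
  have "cnv t \<alpha> \<subseteq> {p. 0 \<le> aff c0 c1 c2 p}"
    unfolding cnv_def by (rule hull_minimal) (use assms(1) convex_aff_nonneg in auto)
  then show ?thesis using assms(2) by auto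
qed

lemma aff_nonpos_on_cnv:
  assumes "\<forall>k\<in>\<alpha>. aff c0 c1 c2 (gamma2 (t k)) \<le> 0" "p \<in> cnv t \<alpha>"
  shows "aff c0 c1 c2 p \<le> 0"
proof -
  have "0 \<le> aff (- c0) (- c1) (- c2) p"
    by (rule aff_nonneg_on_cnv[OF _ assms(2)])
      (use assms(1) in \<open>simp flip: aff_minus del: aff_gamma2\<close>)
  then show ?thesis by (simp flip: aff_minus)
qed

lemma aff_le_on_cnv:
  assumes "\<forall>k\<in>\<alpha>. aff c0 c1 c2 (gamma2 (t k)) \<le> aff d0 d1 d2 (gamma2 (t k))" "p \<in> cnv t \<alpha>"
  shows "aff c0 c1 c2 p \<le> aff d0 d1 d2 p"
proof -
  have "0 \<le> aff (d0 - c0) (d1 - c1) (d2 - c2) p"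
    by (rule aff_nonneg_on_cnv[OF _ assms(2)])
      (use assms(1) in \<open>simp flip: aff_diff del: aff_gamma2\<close>)
  then show ?thesis by (simp flip: aff_diff)
qed

lemma hgt_eq_aff:
  assumes "\<forall>k\<in>\<alpha>. aff c0 c1 c2 (gamma2 (t k)) = t k ^ 3" "p \<in> cnv t \<alpha>"
  shows "hgt t \<alpha> p = aff c0 c1 c2 p"
proof -
  let ?A = "aff c0 c1 c2"
  let ?C = "convex hull ((\<lambda>i. gamma3 (t i)) ` \<alpha>)"
  have lift: "gamma3 (t k) = (gamma2 (t k), ?A (gamma2 (t k)))" if "k \<in> \<alpha>" for k
    using assms(1) that by (simp add: gamma3_def gamma2_def)
  have "convex {w. snd w = ?A (fst w)}"
    unfolding convex_def by (auto simp: aff_convex_combination)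
  then have graph: "?C \<subseteq> {w. snd w = ?A (fst w)}"
    by (rule hull_minimal[rotated]) (auto simp: lift)
  have "convex {q. (q, ?A q) \<in> ?C}"
  proof (rule convexI)
    fix x y :: "real \<times> real" and u v :: real
    assume h: "x \<in> {q. (q, ?A q) \<in> ?C}" "y \<in> {q. (q, ?A q) \<in> ?C}" "0 \<le> u" "0 \<le> v" "u + v = 1"
    have "u *\<^sub>R (x, ?A x) + v *\<^sub>R (y, ?A y) \<in> ?C"
      by (rule convexD[OF convex_convex_hull]) (use h in simp_all)
    then show "u *\<^sub>R x + v *\<^sub>R y \<in> {q. (q, ?A q) \<in> ?C}"
      using h(5) by (simp add: aff_convex_combination)
  qed
  moreover have "(\<lambda>i. gamma2 (t i)) ` \<alpha> \<subseteq> {q. (q, ?A q) \<in> ?C}"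
  proof (rule image_subsetI)
    fix k assume "k \<in> \<alpha>"
    then have "gamma3 (t k) \<in> ?C" by (simp add: hull_inc)
    then show "gamma2 (t k) \<in> {q. (q, ?A q) \<in> ?C}"
      using lift[OF \<open>k \<in> \<alpha>\<close>] by (simp del: aff_gamma2)
  qed
  ultimately have "cnv t \<alpha> \<subseteq> {q. (q, ?A q) \<in> ?C}"
    unfolding cnv_def by (intro hull_minimal)
  then have "(p, ?A p) \<in> ?C" using assms(2) by auto
  then show ?thesis
    unfolding hgt_def by (rule the_equality) (use graph in auto)
qed

lemma cnv_aff_zero_face:
  assumes "finite \<alpha>" "\<forall>k\<in>\<alpha>. 0 \<le> aff c0 c1 c2 (gamma2 (t k))"
    and "p \<in> cnv t \<alpha>" "aff c0 c1 c2 p = 0"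
  shows "p \<in> cnv t {k\<in>\<alpha>. aff c0 c1 c2 (gamma2 (t k)) = 0}"
proof -
  let ?S = "(\<lambda>i. gamma2 (t i)) ` \<alpha>" and ?H = "{x. inner (- c1, - c2) x = c0}"
  have aff_inner: "aff c0 c1 c2 x = c0 - inner (- c1, - c2) x" for x
    by (simp add: aff_def inner_prod_def)
  have "inner (- c1, - c2) x \<le> c0" if "x \<in> convex hull ?S" for x
    using aff_nonneg_on_cnv[OF assms(2), of x] that unfolding cnv_def aff_inner by simp
  then have "convex hull ?S \<inter> ?H face_of convex hull ?S"
    by (intro face_of_Int_supporting_hyperplane_le) auto
  moreover have "compact ?S" using assms(1) by (simp add: finite_imp_compact)
  ultimately obtain S' where S': "S' \<subseteq> ?S" "convex hull ?S \<inter> ?H = convex hull S'"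
    using face_of_convex_hull_subset by blast
  have "S' \<subseteq> (\<lambda>i. gamma2 (t i)) ` {k\<in>\<alpha>. aff c0 c1 c2 (gamma2 (t k)) = 0}"
  proof
    fix s assume "s \<in> S'"
    then have "s \<in> convex hull S'" by (rule hull_inc)
    then have "s \<in> ?H" using S'(2) by blast
    moreover obtain k where "k \<in> \<alpha>" "s = gamma2 (t k)" using S'(1) \<open>s \<in> S'\<close> by auto
    ultimately show "s \<in> (\<lambda>i. gamma2 (t i)) ` {k\<in>\<alpha>. aff c0 c1 c2 (gamma2 (t k)) = 0}"
      unfolding aff_inner by auto
  qed
  moreover have "p \<in> convex hull S'"
  proof -
    have "p \<in> convex hull ?S \<inter> ?H"
      using assms(3,4) unfolding cnv_def aff_inner by simp
    then show ?thesis by (simp only: S'(2))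
  qed
  ultimately show ?thesis
    unfolding cnv_def using hull_mono by blast
qed

section \<open>Chords and lifted planes\<close>

definition chord :: "real \<Rightarrow> real \<Rightarrow> real \<times> real \<Rightarrow> real" where
  "chord a b = aff (a * b) (- (a + b)) 1"

lemma chord_gamma2 [simp]: "chord a b (gamma2 s) = (s - a) * (s - b)"
  by (simp add: chord_def algebra_simps power2_eq_square)

lemma chord_eq: "chord a b p = snd p - (a + b) * fst p + a * b"
  by (simp add: chord_def aff_def algebra_simps)

lemma chord_shift: "chord b c p - chord a b p = (a - c) * (fst p - b)"
  by (simp add: chord_eq algebra_simps)

lemma chord_nonneg_on_cnv:
  "\<forall>k\<in>\<alpha>. 0 \<le> chord a b (gamma2 (t k)) \<Longrightarrow> p \<in> cnv t \<alpha> \<Longrightarrow> 0 \<le> chord a b p"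
  unfolding chord_def by (rule aff_nonneg_on_cnv)

lemma chord_nonpos_on_cnv:
  "\<forall>k\<in>\<alpha>. chord a b (gamma2 (t k)) \<le> 0 \<Longrightarrow> p \<in> cnv t \<alpha> \<Longrightarrow> chord a b p \<le> 0"
  unfolding chord_def by (rule aff_nonpos_on_cnv)

lemma cnv_chord_zero_face:
  assumes "finite \<alpha>"
    and "(\<forall>k\<in>\<alpha>. 0 \<le> chord a b (gamma2 (t k))) \<or> (\<forall>k\<in>\<alpha>. chord a b (gamma2 (t k)) \<le> 0)"
    and "p \<in> cnv t \<alpha>" "chord a b p = 0"
  shows "p \<in> cnv t {k\<in>\<alpha>. t k = a \<or> t k = b}"
proof -
  have pos: "aff (a * b) (- (a + b)) 1 x = chord a b x"
    and neg: "aff (- (a * b)) (a + b) (- 1) x = - chord a b x" for x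
    by (simp_all add: chord_def aff_def algebra_simps)
  from assms(2) have "p \<in> cnv t {k\<in>\<alpha>. chord a b (gamma2 (t k)) = 0}"
  proof
    assume "\<forall>k\<in>\<alpha>. 0 \<le> chord a b (gamma2 (t k))"
    then show ?thesis
      using cnv_aff_zero_face[OF assms(1) _ assms(3), of "a * b" "- (a + b)" 1] assms(4)
      by (simp only: pos)
  next
    assume "\<forall>k\<in>\<alpha>. chord a b (gamma2 (t k)) \<le> 0"
    then show ?thesis
      using cnv_aff_zero_face[OF assms(1) _ assms(3), of "- (a * b)" "a + b" "- 1"] assms(4)
      by (simp only: neg neg_0_le_iff_le neg_equal_0_iff_equal)
  qed
  then show ?thesis by simp
qed

text \<open>The plane through gamma3 a, gamma3 b and gamma3 c, as a function of the projection. Over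
  the segment from gamma2 a to gamma2 b the third parameter does not matter: the difference
  of two such planes is a multiple of chord a b.\<close>
definition cubic_plane :: "real \<Rightarrow> real \<Rightarrow> real \<Rightarrow> real \<times> real \<Rightarrow> real" where
  "cubic_plane a b c = aff (a * b * c) (- (a * b + b * c + a * c)) (a + b + c)"

lemma cubic_plane_gamma2 [simp]:
  "cubic_plane a b c (gamma2 s) = s ^ 3 - (s - a) * (s - b) * (s - c)"
  by (simp add: cubic_plane_def algebra_simps power2_eq_square power3_eq_cube)

lemma hgt_triangle:
  "p \<in> cnv t {a, b, c} \<Longrightarrow> hgt t {a, b, c} p = cubic_plane (t a) (t b) (t c) p"
  unfolding cubic_plane_def by (rule hgt_eq_aff) (auto simp: algebra_simps power2_eq_square power3_eq_cube)

lemma hgt_edge: "p \<in> cnv t {u, v} \<Longrightarrow> hgt t {u, v} p = cubic_plane (t u) (t v) w p"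
  unfolding cubic_plane_def by (rule hgt_eq_aff) (auto simp: algebra_simps power2_eq_square power3_eq_cube)

lemma hgt_edge_le_hgt_triangle:
  assumes "\<forall>k\<in>{a, b, c}. 0 \<le> (t k - t u) * (t k - t v) * (t k - w)"
    and "p \<in> cnv t {u, v}" "p \<in> cnv t {a, b, c}"
  shows "hgt t {u, v} p \<le> hgt t {a, b, c} p"
proof -
  have "\<forall>k\<in>{a, b, c}. cubic_plane (t u) (t v) w (gamma2 (t k))
      \<le> cubic_plane (t a) (t b) (t c) (gamma2 (t k))"
    using assms(1) by auto
  from aff_le_on_cnv[OF this[unfolded cubic_plane_def] assms(3)]
  show ?thesis unfolding hgt_edge[OF assms(2), of w] hgt_triangle[OF assms(3)] cubic_plane_def .
qed

lemma hgt_triangle_le_hgt_edge: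
  assumes "\<forall>k\<in>{a, b, c}. (t k - t u) * (t k - t v) * (t k - w) \<le> 0"
    and "p \<in> cnv t {u, v}" "p \<in> cnv t {a, b, c}"
  shows "hgt t {a, b, c} p \<le> hgt t {u, v} p"
proof -
  have "\<forall>k\<in>{a, b, c}. cubic_plane (t a) (t b) (t c) (gamma2 (t k))
      \<le> cubic_plane (t u) (t v) w (gamma2 (t k))"
    using assms(1) by auto
  from aff_le_on_cnv[OF this[unfolded cubic_plane_def] assms(3)]
  show ?thesis unfolding hgt_edge[OF assms(2), of w] hgt_triangle[OF assms(3)] cubic_plane_def .
qed

lemma cubic_nonneg_witness:
  fixes S :: "real set"
  assumes "finite S" "u < v" "\<forall>x\<in>S. \<forall>y\<in>S. \<not> (x < u \<and> u < y \<and> y < v)"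
  obtains w where "\<forall>s\<in>S. 0 \<le> (s - u) * (s - v) * (s - w)"
proof (cases "\<exists>y\<in>S. u < y \<and> y < v")
  case True
  then have "\<forall>s\<in>S. u \<le> s" using assms(3) by (meson not_le)
  then have "\<forall>s\<in>S. 0 \<le> (s - u) * (s - v) * (s - v)" by (simp add: mult.assoc)
  then show ?thesis by (rule that)
next
  case False
  have "\<forall>s\<in>S. 0 \<le> (s - u) * (s - v) * (s - Min (insert u S))"
  proof
    fix s assume "s \<in> S"
    then have "0 \<le> (s - u) * (s - v)"
      using False assms(2) by (smt (verit) mult_nonneg_nonneg mult_nonpos_nonpos)
    moreover have "Min (insert u S) \<le> s" using \<open>s \<in> S\<close> assms(1) by simp
    ultimately show "0 \<le> (s - u) * (s - v) * (s - Min (insert u S))" by simp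
  qed
  then show ?thesis by (rule that)
qed

lemma cubic_nonpos_witness:
  fixes S :: "real set"
  assumes "finite S" "u < v" "\<forall>x\<in>S. \<forall>y\<in>S. \<not> (u < x \<and> x < v \<and> v < y)"
  obtains w where "\<forall>s\<in>S. (s - u) * (s - v) * (s - w) \<le> 0"
proof (cases "\<exists>x\<in>S. u < x \<and> x < v")
  case True
  then have "\<forall>s\<in>S. s \<le> v" using assms(3) by (meson not_le)
  then have "\<forall>s\<in>S. (s - u) * (s - v) * (s - u) \<le> 0"
    by (metis diff_le_0_iff_le mult.commute mult.left_commute mult_nonneg_nonpos
        zero_le_square)
  then show ?thesis by (rule that)
next
  case False
  have "\<forall>s\<in>S. (s - u) * (s - v) * (s - Max (insert v S)) \<le> 0"
  proof
    fix s assume "s \<in> S"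
    then have "0 \<le> (s - u) * (s - v)"
      using False assms(2) by (smt (verit) mult_nonneg_nonneg mult_nonpos_nonpos)
    moreover have "s \<le> Max (insert v S)" using \<open>s \<in> S\<close> assms(1) by simp
    ultimately show "(s - u) * (s - v) * (s - Max (insert v S)) \<le> 0"
      by (simp add: mult_nonneg_nonpos)
  qed
  then show ?thesis by (rule that)
qed

lemma mem_segment_if_chord_zero:
  assumes "a < b" "a \<le> fst p" "fst p \<le> b" "chord a b p = 0"
  shows "p \<in> closed_segment (gamma2 a) (gamma2 b)"
proof -
  define u where "u = (fst p - a) / (b - a)"
  have "u * (b - a) = fst p - a" using assms(1) by (simp add: u_def)
  then have x: "fst p = (1 - u) * a + u * b" by (simp add: algebra_simps)
  have "snd p = (a + b) * fst p - a * b" using assms(4) by (simp add: chord_eq)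
  then have y: "snd p = (1 - u) * a^2 + u * b^2"
    unfolding x by (simp add: algebra_simps power2_eq_square)
  have "0 \<le> u" "u \<le> 1" using assms(1-3) by (auto simp: u_def)
  moreover have "p = (1 - u) *\<^sub>R gamma2 a + u *\<^sub>R gamma2 b"
    using x y by (simp add: prod_eq_iff gamma2_def)
  ultimately show ?thesis by (auto simp: in_segment)
qed

text \<open>The barycentric coordinates are the Lagrange basis polynomials for the nodes a, b, c,
  extended to the plane by replacing (s - x) * (s - y) with chord x y.\<close>
lemma mem_triangle_if_chords:
  assumes "a < b" "b < c" "0 \<le> chord b c p" "chord a c p \<le> 0" "0 \<le> chord a b p"
  shows "p \<in> convex hull {gamma2 a, gamma2 b, gamma2 c}"
proof -
  define qa qb qc where "qa = (a - b) * (a - c)" and "qb = (b - a) * (b - c)"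
    and "qc = (c - a) * (c - b)"
  define la lb lc where "la = chord b c p / qa" and "lb = chord a c p / qb"
    and "lc = chord a b p / qc"
  have q: "0 < qa" "qb < 0" "0 < qc"
    using assms(1,2) by (simp_all add: qa_def qb_def qc_def mult_neg_neg mult_pos_neg)
  then have "0 \<le> la" "0 \<le> lb" "0 \<le> lc"
    unfolding la_def lb_def lc_def using assms(3-5) by (simp_all add: divide_nonpos_neg)
  moreover have "la + lb + lc = 1"
    using q unfolding la_def lb_def lc_def
    by (simp add: field_simps, unfold qa_def qb_def qc_def chord_eq, algebra)
  moreover have "p = la *\<^sub>R gamma2 a + lb *\<^sub>R gamma2 b + lc *\<^sub>R gamma2 c"
  proof -
    have "la * a + lb * b + lc * c = fst p"
      using q unfolding la_def lb_def lc_def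
      by (simp add: field_simps, unfold qa_def qb_def qc_def chord_eq, algebra)
    moreover have "la * a^2 + lb * b^2 + lc * c^2 = snd p"
      using q unfolding la_def lb_def lc_def
      by (simp add: field_simps, unfold qa_def qb_def qc_def chord_eq, algebra)
    ultimately show ?thesis by (simp add: prod_eq_iff gamma2_def mult.commute)
  qed
  ultimately show ?thesis unfolding convex_hull_3 by blast
qed

lemma crossing_chords:
  assumes "a < c" "c < b" "b < d"
  obtains p where "p \<in> closed_segment (gamma2 a) (gamma2 b)"
    "p \<in> closed_segment (gamma2 c) (gamma2 d)" "cubic_plane a b 0 p < cubic_plane c d 0 p"
proof -
  define den where "den = c + d - a - b"
  define x where "x = (c * d - a * b) / den"
  define p where "p = (x, (a + b) * x - a * b)"
  have "0 < den" using assms by (simp add: den_def)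
  then have xden: "x * den = c * d - a * b" by (simp add: x_def)
  have "(x - a) * den = (c - a) * (d - a)" "(b - x) * den = (b - c) * (d - b)"
    "(x - c) * den = (c - a) * (b - c)" "(d - x) * den = (d - a) * (d - b)"
    using xden by (simp_all add: den_def algebra_simps)
  then have "0 < (x - a) * den" "0 < (b - x) * den" "0 < (x - c) * den" "0 < (d - x) * den"
    using assms by simp_all
  then have x: "a < x" "x < b" "c < x" "x < d"
    using \<open>0 < den\<close> by (simp_all add: zero_less_mult_iff)
  have "cubic_plane c d 0 p - cubic_plane a b 0 p = den * snd p - (c * d - a * b) * x"
    by (simp add: p_def cubic_plane_def aff_def den_def algebra_simps)
  also have "\<dots> = den * ((x - a) * (b - x))"
    unfolding xden[symmetric] by (simp add: p_def algebra_simps)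
  also have "\<dots> > 0" using \<open>0 < den\<close> x by simp
  finally have "cubic_plane a b 0 p < cubic_plane c d 0 p" by simp
  moreover have "chord a b p = 0" "chord c d p = 0"
    using xden by (simp_all add: p_def chord_eq den_def algebra_simps)
  ultimately show ?thesis
    using assms x by (intro that mem_segment_if_chord_zero) (simp_all add: p_def)
qed

lemma affine_independent_gamma2:
  fixes x y z :: real
  assumes "x < y" "y < z"
  shows "\<not> affine_dependent {gamma2 x, gamma2 y, gamma2 z}"
proof
  assume "affine_dependent {gamma2 x, gamma2 y, gamma2 z}"
  then have "collinear {gamma2 x, gamma2 y, gamma2 z}"
    by (rule affine_dependent_imp_collinear_3)
  then have "collinear {0, gamma2 x - gamma2 y, gamma2 z - gamma2 y}"
    using collinear_3[of "gamma2 x" "gamma2 y" "gamma2 z"] by (simp add: NO_MATCH_def)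
  moreover have "gamma2 x - gamma2 y \<noteq> 0" "gamma2 z - gamma2 y \<noteq> 0"
    using assms by (auto simp: gamma2_def prod_eq_iff)
  ultimately obtain c where "gamma2 z - gamma2 y = c *\<^sub>R (gamma2 x - gamma2 y)"
    by (auto simp: collinear_lemma)
  then have c1: "z - y = c * (x - y)" and c2: "z^2 - y^2 = c * (x^2 - y^2)"
    by (auto simp: gamma2_def prod_eq_iff)
  have "(z - y) * (z + y) = c * (x - y) * (x + y)"
    using c2 by (simp add: algebra_simps power2_eq_square)
  also have "\<dots> = (z - y) * (x + y)" using c1 by simp
  finally show False using assms by simp
qed

section \<open>Triangulations of a convex polygon\<close>

text \<open>For a < c < b < d the edges {a, b} and {c, d} cross, and where they cross the lift of
  {a, b} lies below that of {c, d} (lemma passes_below_lift).\<close>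
definition passes_below :: "nat \<Rightarrow> nat \<Rightarrow> nat \<Rightarrow> nat \<Rightarrow> bool" where
  "passes_below a b c d \<longleftrightarrow> a < c \<and> c < b \<and> b < d"

definition crossing :: "nat \<Rightarrow> nat \<Rightarrow> nat \<Rightarrow> nat \<Rightarrow> bool" where
  "crossing a b c d \<longleftrightarrow> passes_below a b c d \<or> passes_below c d a b"

text \<open>polygon_triang P i j T: T is a triangulation of the convex polygon with vertices
  i, i + 1, ..., j, given by the triangle {i, m, j} on the edge {i, j} and triangulations of
  the two polygons cut off by it; every edge of T, including the boundary edges, satisfies P.\<close>
inductive polygon_triang :: "(nat \<Rightarrow> nat \<Rightarrow> bool) \<Rightarrow> nat \<Rightarrow> nat \<Rightarrow> nat set set \<Rightarrow> bool"
  for P where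
  edge: "P i (Suc i) \<Longrightarrow> polygon_triang P i (Suc i) {}"
| apex: "i < m \<Longrightarrow> m < j \<Longrightarrow> P i j \<Longrightarrow> polygon_triang P i m A \<Longrightarrow> polygon_triang P m j B
    \<Longrightarrow> polygon_triang P i j (insert {i, m, j} (A \<union> B))"

lemma polygon_triang_P: "polygon_triang P i j T \<Longrightarrow> P i j"
  by (induction rule: polygon_triang.induct)

lemma polygon_triang_triangle:
  "polygon_triang P i j T \<Longrightarrow> \<rho> \<in> T \<Longrightarrow>
    \<exists>a b c. \<rho> = {a, b, c} \<and> i \<le> a \<and> a < b \<and> b < c \<and> c \<le> j \<and> P a b \<and> P b c \<and> P a c"
proof (induction rule: polygon_triang.induct)
  case (edge i)
  then show ?case by simp
next
  case (apex i m j A B)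
  from apex.prems consider "\<rho> = {i, m, j}" | "\<rho> \<in> A" | "\<rho> \<in> B" by blast
  then show ?case
  proof cases
    case 1
    then show ?thesis using apex.hyps polygon_triang_P by blast
  next
    case 2
    then show ?thesis using apex.IH(1) apex.hyps(2) by (meson less_imp_le_nat order.trans)
  next
    case 3
    then show ?thesis using apex.IH(2) apex.hyps(1) by (meson less_imp_le_nat order.trans)
  qed
qed

lemma polygon_triang_P_edges:
  assumes "polygon_triang P i j T" "\<rho> \<in> T" "x \<in> \<rho>" "y \<in> \<rho>" "x < y"
  shows "P x y"
proof -
  obtain a b c where "\<rho> = {a, b, c}" "a < b" "b < c" "P a b" "P b c" "P a c"
    using polygon_triang_triangle[OF assms(1,2)] by blast
  then show ?thesis using assms(3-5) by auto
qed

lemma polygon_triang_apex: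
  assumes "polygon_triang P i j T" "Suc i < j"
  shows "\<exists>m. i < m \<and> m < j \<and> {i, m, j} \<in> T"
  using assms by (cases rule: polygon_triang.cases) auto

lemma polygon_triang_contains_edge:
  "polygon_triang P i j T \<Longrightarrow> i \<le> u \<Longrightarrow> u < v \<Longrightarrow> v \<le> j \<Longrightarrow>
    \<forall>\<rho>\<in>T. \<forall>x\<in>\<rho>. \<forall>y\<in>\<rho>. \<not> crossing u v x y \<Longrightarrow> (u = i \<and> v = j) \<or> (\<exists>\<rho>\<in>T. {u, v} \<subseteq> \<rho>)"
proof (induction arbitrary: u v rule: polygon_triang.induct)
  case (edge i)
  then show ?case by simp
next
  case (apex i m j A B)
  consider "v \<le> m" | "m \<le> u" | "u < m" "m < v" by linarith
  then show ?case
  proof cases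
    case 1
    then show ?thesis using apex.IH(1)[of u v] apex.prems by auto
  next
    case 2
    then show ?thesis using apex.IH(2)[of u v] apex.prems by auto
  next
    case 3
    have "\<not> crossing u v i m" "\<not> crossing u v m j" using apex.prems(4) by auto
    then show ?thesis using 3 apex.prems(1,3) by (auto simp: crossing_def passes_below_def)
  qed
qed

lemma polygon_triang_subset: "polygon_triang P i j T \<Longrightarrow> \<rho> \<in> T \<Longrightarrow> \<rho> \<subseteq> {i..j}"
  by (fastforce dest: polygon_triang_triangle)

text \<open>\<rho> lies in the polygon a, ..., b and \<sigma> outside of it, so that the chord from a to b
  separates them.\<close>
definition separated :: "nat \<Rightarrow> nat \<Rightarrow> nat set \<Rightarrow> nat set \<Rightarrow> bool" where
  "separated a b \<rho> \<sigma> \<longleftrightarrow> \<rho> \<subseteq> {a..b} \<and> (\<forall>k\<in>\<sigma>. k \<le> a \<or> b \<le> k)"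

lemma polygon_triang_separated:
  "polygon_triang P i j T \<Longrightarrow> \<rho> \<in> T \<Longrightarrow> \<sigma> \<in> T \<Longrightarrow> \<rho> = \<sigma> \<or>
    (\<exists>a b. i \<le> a \<and> a < b \<and> b \<le> j \<and> (separated a b \<rho> \<sigma> \<or> separated a b \<sigma> \<rho>))"
proof (induction arbitrary: \<rho> \<sigma> rule: polygon_triang.induct)
  case (edge i)
  then show ?case by simp
next
  case (apex i m j A B)
  have A: "\<rho> \<subseteq> {i..m}" if "\<rho> \<in> A" for \<rho>
    using polygon_triang_subset[OF apex.hyps(4) that] .
  have B: "\<rho> \<subseteq> {m..j}" if "\<rho> \<in> B" for \<rho>
    using polygon_triang_subset[OF apex.hyps(5) that] .
  have apex_sep: "\<exists>a b. i \<le> a \<and> a < b \<and> b \<le> j \<and> separated a b \<rho> {i, m, j}"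
    if "\<rho> \<in> A \<union> B" for \<rho>
  proof (cases "\<rho> \<in> A")
    case True
    then show ?thesis
      using A apex.hyps(1,2) unfolding separated_def by (intro exI[of _ i] exI[of _ m]) auto
  next
    case False
    then show ?thesis
      using that B apex.hyps(1,2) unfolding separated_def by (intro exI[of _ m] exI[of _ j]) auto
  qed
  have AB_sep: "\<exists>a b. i \<le> a \<and> a < b \<and> b \<le> j \<and> separated a b \<rho> \<sigma>"
    if "\<rho> \<in> A" "\<sigma> \<in> B" for \<rho> \<sigma>
    using A[OF that(1)] B[OF that(2)] apex.hyps(1,2) unfolding separated_def by fastforce
  have IH: "\<rho> = \<sigma> \<or> (\<exists>a b. i \<le> a \<and> a < b \<and> b \<le> j \<and> (separated a b \<rho> \<sigma> \<or> separated a b \<sigma> \<rho>))"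
    if "\<rho> \<in> A \<and> \<sigma> \<in> A \<or> \<rho> \<in> B \<and> \<sigma> \<in> B" for \<rho> \<sigma>
    using that apex.IH[of \<rho> \<sigma>] apex.hyps(1,2) by (meson le_trans less_imp_le_nat)
  consider "\<rho> = \<sigma>" | "\<rho> = {i, m, j}" "\<sigma> \<in> A \<union> B" | "\<sigma> = {i, m, j}" "\<rho> \<in> A \<union> B"
    | "\<rho> \<in> A \<union> B" "\<sigma> \<in> A \<union> B"
    using apex.prems by blast
  then show ?case
  proof cases
    case 1
    then show ?thesis by simp
  next
    case 2
    then show ?thesis using apex_sep[of \<sigma>] by blast
  next
    case 3
    then show ?thesis using apex_sep[of \<rho>] by blast
  next
    case 4
    then show ?thesis using IH[of \<rho> \<sigma>] AB_sep[of \<rho> \<sigma>] AB_sep[of \<sigma> \<rho>] by blast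
  qed
qed

text \<open>The combinatorial content of the ordering hypothesis of the theorem.\<close>
locale edge_constraints =
  fixes n :: nat and E1 E2 E3 :: "nat set set"
  assumes edges: "e \<in> E1 \<union> E2 \<union> E3 \<Longrightarrow> is_edge n e"
    and no_later_below_E1: "{u, v} \<in> E1 \<Longrightarrow> {c, d} \<in> E2 \<union> E3 \<Longrightarrow> \<not> passes_below c d u v"
    and no_E3_below_E2: "{u, v} \<in> E2 \<Longrightarrow> {c, d} \<in> E3 \<Longrightarrow> \<not> passes_below c d u v"
    and E2_noncrossing: "{u, v} \<in> E2 \<Longrightarrow> {c, d} \<in> E2 \<Longrightarrow> \<not> crossing u v c d"
begin

definition blocked :: "nat \<Rightarrow> nat \<Rightarrow> bool" where
  "blocked c d \<longleftrightarrow> (\<exists>u v. {u, v} \<in> E1 \<and> passes_below c d u v)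
     \<or> (\<exists>u v. {u, v} \<in> E3 \<and> passes_below u v c d) \<or> (\<exists>u v. {u, v} \<in> E2 \<and> crossing u v c d)"

lemma blocked_E1I: "{u, v} \<in> E1 \<Longrightarrow> passes_below c d u v \<Longrightarrow> blocked c d"
  and blocked_E3I: "{u, v} \<in> E3 \<Longrightarrow> passes_below u v c d \<Longrightarrow> blocked c d"
  and blocked_E2I: "{u, v} \<in> E2 \<Longrightarrow> crossing u v c d \<Longrightarrow> blocked c d"
  unfolding blocked_def by blast+

lemma blockedE:
  assumes "blocked c d"
  obtains (E1) u v where "{u, v} \<in> E1" "passes_below c d u v"
    | (E3) u v where "{u, v} \<in> E3" "passes_below u v c d"
    | (E2) u v where "{u, v} \<in> E2" "crossing u v c d"
  using assms unfolding blocked_def by blast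

lemma not_blocked_Suc: "\<not> blocked i (Suc i)"
  by (auto simp: blocked_def crossing_def passes_below_def)

lemma not_blocked_E2: "{u, v} \<in> E2 \<Longrightarrow> \<not> blocked u v"
  unfolding blocked_def using no_later_below_E1 no_E3_below_E2 E2_noncrossing by blast

text \<open>The critical case of the apex construction below: if {i, m} passes below the edge
  {u, v} of E1, then {u, j} is unblocked, contradicting the minimality of m.\<close>
lemma not_blocked_below_E1:
  assumes ij: "\<not> blocked i j" and mj: "\<not> blocked m j" and uv: "{u, v} \<in> E1"
    and "i < u" "u < m" "m < j" "m < v"
  shows "\<not> blocked u j"
proof
  have "\<not> j < v"
    using blocked_E1I[OF uv, of i j] ij assms(4-6) by (auto simp: passes_below_def)
  then have "v \<le> j" by simp
  assume "blocked u j"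
  then show False
  proof (cases rule: blockedE)
    case (E1 x y)
    then show False using blocked_E1I[of x y i j] ij assms(4) by (auto simp: passes_below_def)
  next
    case (E3 x y)
    then have "v \<le> y" using no_later_below_E1[OF uv, of x y] by (auto simp: passes_below_def)
    then show False
      using E3 blocked_E3I[of x y i j] blocked_E3I[of x y m j] ij mj assms(4-7)
      by (cases "x < i") (auto simp: passes_below_def)
  next
    case (E2 x y)
    then show False
      using blocked_E2I[of x y i j] blocked_E2I[of x y m j] no_later_below_E1[OF uv, of x y]
        ij mj assms(4-7) \<open>v \<le> j\<close>
      by (cases "x < i"; cases "m < y") (auto simp: crossing_def passes_below_def)
  qed
qed

lemma not_blocked_left_of_least:
  assumes ij: "\<not> blocked i j" and mj: "\<not> blocked m j" and "i < m" "m < j"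
    and between: "\<And>u. i < u \<Longrightarrow> u < m \<Longrightarrow> blocked u j"
  shows "\<not> blocked i m"
proof
  assume "blocked i m"
  then show False
  proof (cases rule: blockedE)
    case (E1 u v)
    then show False
      using not_blocked_below_E1[OF ij mj E1(1)] between assms(3,4)
      by (auto simp: passes_below_def)
  next
    case (E3 u v)
    then show False using blocked_E3I[of u v i j] ij assms(4) by (auto simp: passes_below_def)
  next
    case (E2 u v)
    then show False
      using blocked_E2I[of u v i j] blocked_E2I[of u v m j] not_blocked_E2[of u v] between ij mj
        assms(3,4)
      by (cases "v < j"; cases "v = j") (auto simp: crossing_def passes_below_def)
  qed
qed

lemma unblocked_apex:
  assumes "Suc i < j" "\<not> blocked i j"
  obtains m where "i < m" "m < j" "\<not> blocked i m" "\<not> blocked m j"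
proof -
  let ?Q = "\<lambda>m. i < m \<and> \<not> blocked m j"
  define m where "m = (LEAST m. ?Q m)"
  have "?Q (j - 1)"
    using assms(1) not_blocked_Suc[of "j - 1"] by simp
  then have Qm: "?Q m" and "m \<le> j - 1"
    unfolding m_def by (rule LeastI, rule Least_le)
  then have "m < j" using assms(1) by simp
  have "blocked u j" if "i < u" "u < m" for u
    using not_less_Least[of u ?Q] that unfolding m_def by blast
  then have "\<not> blocked i m"
    using not_blocked_left_of_least[OF assms(2)] Qm \<open>m < j\<close> by blast
  then show ?thesis
    using that Qm \<open>m < j\<close> by blast
qed

lemma not_blocked_boundary: "\<not> blocked 1 n"
proof
  assume "blocked 1 n"
  then obtain u v where uv: "{u, v} \<in> E1 \<union> E2 \<union> E3" "u < 1 \<or> n < v"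
    by (cases rule: blockedE) (auto simp: passes_below_def crossing_def)
  moreover have "{u, v} \<subseteq> {1..n}" using edges[OF uv(1)] unfolding is_edge_def by blast
  ultimately show False by auto
qed

lemma exists_polygon_triang:
  "i < j \<Longrightarrow> \<not> blocked i j \<Longrightarrow> \<exists>T. polygon_triang (\<lambda>a b. \<not> blocked a b) i j T"
proof (induction "j - i" arbitrary: i j rule: less_induct)
  case less
  show ?case
  proof (cases "j = Suc i")
    case True
    have "polygon_triang (\<lambda>a b. \<not> blocked a b) i (Suc i) {}"
      by (rule polygon_triang.edge) (simp add: not_blocked_Suc)
    then show ?thesis using True by blast
  next
    case False
    then have "Suc i < j" using less.prems(1) by simp
    then obtain m where m: "i < m" "m < j" "\<not> blocked i m" "\<not> blocked m j"
      using less.prems(2) by (rule unblocked_apex)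
    then have "m - i < j - i" "j - m < j - i" by auto
    then obtain A B where A: "polygon_triang (\<lambda>a b. \<not> blocked a b) i m A"
      and B: "polygon_triang (\<lambda>a b. \<not> blocked a b) m j B"
      using less.hyps m by blast
    have "polygon_triang (\<lambda>a b. \<not> blocked a b) i j (insert {i, m, j} (A \<union> B))"
      by (rule polygon_triang.apex[OF m(1,2) _ A B]) (simp add: less.prems(2))
    then show ?thesis by blast
  qed
qed

end

locale moment_curve =
  fixes n :: nat and t :: "nat \<Rightarrow> real"
  assumes t_strict_mono: "strict_mono_on {1..n} t"
begin

lemma t_less_iff: "k \<in> {1..n} \<Longrightarrow> l \<in> {1..n} \<Longrightarrow> t k < t l \<longleftrightarrow> k < l"
  using strict_mono_on_less[OF t_strict_mono] by blast

lemma t_le_iff: "k \<in> {1..n} \<Longrightarrow> l \<in> {1..n} \<Longrightarrow> t k \<le> t l \<longleftrightarrow> k \<le> l"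
  using strict_mono_on_less_eq[OF t_strict_mono] by blast

lemma t_eq_iff: "k \<in> {1..n} \<Longrightarrow> l \<in> {1..n} \<Longrightarrow> t k = t l \<longleftrightarrow> k = l"
  using strict_mono_on_eq[OF t_strict_mono] by blast

lemma t_preimage_pair:
  "\<alpha> \<subseteq> {1..n} \<Longrightarrow> a \<in> {1..n} \<Longrightarrow> b \<in> {1..n} \<Longrightarrow> {k\<in>\<alpha>. t k = t a \<or> t k = t b} = \<alpha> \<inter> {a, b}"
  using t_eq_iff by auto

lemma mem_if_vertex_in_cnv:
  assumes "Z \<subseteq> {1..n}" "k \<in> {1..n}" "gamma2 (t k) \<in> cnv t Z"
  shows "k \<in> Z"
proof -
  have "finite Z" using assms(1) finite_subset by blast
  then have "gamma2 (t k) \<in> cnv t {l\<in>Z. t l = t k \<or> t l = t k}"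
    using assms(3) by (intro cnv_chord_zero_face disjI1) auto
  then have "gamma2 (t k) \<in> cnv t (Z \<inter> {k})"
    using t_preimage_pair[OF assms(1,2,2)] by simp
  then show ?thesis by (cases "k \<in> Z") auto
qed

lemma cnv_Int_singleton:
  assumes "X \<subseteq> {x}" "x \<in> {1..n}" "Y \<subseteq> {1..n}"
  shows "cnv t X \<inter> cnv t Y \<subseteq> cnv t (X \<inter> Y)"
  using assms mem_if_vertex_in_cnv[of Y x] by (auto dest!: subset_singletonD)

lemma cnv_Int_pair:
  assumes "X \<subseteq> {a, b}" "Y \<subseteq> {a, b}" "a \<in> {1..n}" "b \<in> {1..n}"
  shows "cnv t X \<inter> cnv t Y \<subseteq> cnv t (X \<inter> Y)"
proof -
  have "Y \<subseteq> {1..n}" using assms(2-4) by blast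
  consider "{a, b} \<subseteq> X" | "{a, b} \<subseteq> Y" | "X \<subseteq> {a}" | "X \<subseteq> {b}"
    using assms(1) by blast
  then show ?thesis
  proof cases
    case 1
    then have "X \<inter> Y = Y" using assms(2) by blast
    then show ?thesis by simp
  next
    case 2
    then have "X \<inter> Y = X" using assms(1) by blast
    then show ?thesis by simp
  next
    case 3
    then show ?thesis using cnv_Int_singleton assms(3) \<open>Y \<subseteq> {1..n}\<close> by blast
  next
    case 4
    then show ?thesis using cnv_Int_singleton assms(4) \<open>Y \<subseteq> {1..n}\<close> by blast
  qed
qed

lemma cnv_Int_if_separated:
  assumes "1 \<le> a" "a < b" "b \<le> n" "separated a b \<alpha> \<beta>" "\<beta> \<subseteq> {1..n}"
  shows "cnv t \<alpha> \<inter> cnv t \<beta> \<subseteq> cnv t (\<alpha> \<inter> \<beta>)"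
proof
  fix p assume p: "p \<in> cnv t \<alpha> \<inter> cnv t \<beta>"
  have \<alpha>: "\<alpha> \<subseteq> {a..b}" and \<beta>: "\<forall>k\<in>\<beta>. k \<le> a \<or> b \<le> k"
    using assms(4) by (auto simp: separated_def)
  have ab: "a \<in> {1..n}" "b \<in> {1..n}" using assms(1-3) by auto
  have \<alpha>n: "\<alpha> \<subseteq> {1..n}" using \<alpha> assms(1,3) by auto
  have fin: "finite \<alpha>" "finite \<beta>" using \<alpha> assms(5) finite_subset by blast+
  have below: "\<forall>k\<in>\<alpha>. chord (t a) (t b) (gamma2 (t k)) \<le> 0"
  proof
    fix k assume "k \<in> \<alpha>"
    then have "t a \<le> t k" "t k \<le> t b" using \<alpha> \<alpha>n ab t_le_iff by auto
    then show "chord (t a) (t b) (gamma2 (t k)) \<le> 0" by (simp add: mult_nonneg_nonpos)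
  qed
  have above: "\<forall>k\<in>\<beta>. 0 \<le> chord (t a) (t b) (gamma2 (t k))"
  proof
    fix k assume "k \<in> \<beta>"
    then have "t k \<le> t a \<or> t b \<le> t k" using \<beta> assms(5) ab t_le_iff by blast
    moreover have "t a < t b" using ab assms(2) t_less_iff by auto
    ultimately show "0 \<le> chord (t a) (t b) (gamma2 (t k))" by (auto simp: mult_nonpos_nonpos)
  qed
  have "chord (t a) (t b) p = 0"
    using chord_nonpos_on_cnv[OF below] chord_nonneg_on_cnv[OF above] p by (meson IntD1 IntD2 order.antisym)
  then have "p \<in> cnv t (\<alpha> \<inter> {a, b})" "p \<in> cnv t (\<beta> \<inter> {a, b})"
    using cnv_chord_zero_face[OF fin(1) disjI2[OF below]] cnv_chord_zero_face[OF fin(2) disjI1[OF above]]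
      p t_preimage_pair[OF \<alpha>n ab] t_preimage_pair[OF assms(5) ab] by auto
  then have "p \<in> cnv t (\<alpha> \<inter> {a, b} \<inter> (\<beta> \<inter> {a, b}))"
    using cnv_Int_pair[of "\<alpha> \<inter> {a, b}" a b "\<beta> \<inter> {a, b}"] ab by blast
  then show "p \<in> cnv t (\<alpha> \<inter> \<beta>)"
    using cnv_mono[of "\<alpha> \<inter> {a, b} \<inter> (\<beta> \<inter> {a, b})" "\<alpha> \<inter> \<beta>" t] by blast
qed

text \<open>The convex polygon with vertices i, ..., j, described by the inequalities of its edges.\<close>
definition region :: "nat \<Rightarrow> nat \<Rightarrow> real \<times> real \<Rightarrow> bool" where
  "region i j p \<longleftrightarrow> t i \<le> fst p \<and> fst p \<le> t j \<and> chord (t i) (t j) p \<le> 0 \<and>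
     (\<forall>k. i \<le> k \<longrightarrow> k < j \<longrightarrow> 0 \<le> chord (t k) (t (Suc k)) p)"

lemma region_if_mem_cnv:
  assumes "1 \<le> i" "j \<le> n" "p \<in> cnv t {i..j}"
  shows "region i j p"
proof -
  have mono: "t i \<le> t k" "t k \<le> t j" if "k \<in> {i..j}" for k
    using that assms(1,2) t_le_iff by auto
  have "0 \<le> aff (- t i) 1 0 p"
    by (rule aff_nonneg_on_cnv[OF _ assms(3)]) (simp add: mono)
  moreover have "0 \<le> aff (t j) (- 1) 0 p"
    by (rule aff_nonneg_on_cnv[OF _ assms(3)]) (simp add: mono)
  moreover have "chord (t i) (t j) p \<le> 0"
    by (rule chord_nonpos_on_cnv[OF _ assms(3)]) (simp add: mono mult_nonneg_nonpos)
  moreover have "0 \<le> chord (t k) (t (Suc k)) p" if "i \<le> k" "k < j" for k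
  proof (rule chord_nonneg_on_cnv[OF _ assms(3)], intro ballI)
    fix l assume "l \<in> {i..j}"
    then have "t l \<le> t k \<and> t l \<le> t (Suc k) \<or> t k \<le> t l \<and> t (Suc k) \<le> t l"
      using that assms(1,2) t_le_iff by auto
    then show "0 \<le> chord (t k) (t (Suc k)) (gamma2 (t l))"
      by (auto simp: mult_nonpos_nonpos)
  qed
  ultimately show ?thesis unfolding region_def by (simp add: aff_def)
qed

lemma region_edge:
  assumes "region i (Suc i) p" "1 \<le> i" "Suc i \<le> n"
  shows "p \<in> cnv t {i, Suc i}"
proof -
  have "chord (t i) (t (Suc i)) p = 0" using assms(1) unfolding region_def by fastforce
  moreover have "t i < t (Suc i)" using assms(2,3) t_less_iff by simp
  ultimately show ?thesis
    using assms(1) unfolding region_def cnv_pair by (blast intro: mem_segment_if_chord_zero)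
qed

lemma region_left:
  assumes "region i j p" "1 \<le> i" "i < m" "m < j" "j \<le> n" "chord (t i) (t m) p \<le> 0"
  shows "region i m p"
proof -
  have "fst p \<le> t m"
  proof (rule ccontr)
    assume "\<not> fst p \<le> t m"
    moreover have "t i < t (Suc m)" using assms(2-5) t_less_iff by simp
    ultimately have "(t i - t (Suc m)) * (fst p - t m) < 0"
      by (intro mult_neg_pos) auto
    then have "chord (t m) (t (Suc m)) p < chord (t i) (t m) p"
      using chord_shift[of "t m" "t (Suc m)" p "t i"] by simp
    moreover have "0 \<le> chord (t m) (t (Suc m)) p" using assms(1,3,4) unfolding region_def by simp
    ultimately show False using assms(6) by simp
  qed
  then show ?thesis using assms(1,4,6) unfolding region_def by auto
qed

lemma region_right:
  assumes "region i j p" "1 \<le> i" "i < m" "m < j" "j \<le> n" "chord (t m) (t j) p \<le> 0"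
  shows "region m j p"
proof -
  have "t m \<le> fst p"
  proof (rule ccontr)
    assume "\<not> t m \<le> fst p"
    moreover have "t (m - 1) < t j" by (subst t_less_iff) (use assms(2-5) in auto)
    ultimately have "0 < (t (m - 1) - t j) * (fst p - t m)"
      by (intro mult_neg_neg) auto
    then have "chord (t (m - 1)) (t m) p < chord (t m) (t j) p"
      using chord_shift[of "t m" "t j" p "t (m - 1)"] by simp
    moreover have "i \<le> m - 1" "m - 1 < j" "Suc (m - 1) = m" using assms(3,4) by auto
    then have "0 \<le> chord (t (m - 1)) (t m) p"
      using assms(1) unfolding region_def by metis
    ultimately show False using assms(6) by simp
  qed
  then show ?thesis using assms(1,3,6) unfolding region_def by auto
qed

lemma region_triangle:
  assumes "region i j p" "1 \<le> i" "i < m" "m < j" "j \<le> n"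
    and "0 < chord (t i) (t m) p" "0 < chord (t m) (t j) p"
  shows "p \<in> cnv t {i, m, j}"
proof -
  have "t i < t m" "t m < t j" using assms(2-5) t_less_iff by auto
  then have "p \<in> convex hull {gamma2 (t i), gamma2 (t m), gamma2 (t j)}"
    using assms(1,6,7) unfolding region_def by (intro mem_triangle_if_chords) auto
  then show ?thesis by (simp add: cnv_def)
qed

lemma polygon_triang_covers_region:
  "polygon_triang P i j T \<Longrightarrow> 1 \<le> i \<Longrightarrow> j \<le> n \<Longrightarrow> region i j p \<Longrightarrow>
    p \<in> cnv t {i, j} \<union> (\<Union>\<rho>\<in>T. cnv t \<rho>)"
proof (induction arbitrary: p rule: polygon_triang.induct)
  case (edge i)
  then show ?case using region_edge by blast
next
  case (apex i m j A B)
  have sides: "cnv t {i, m} \<subseteq> cnv t {i, m, j}" "cnv t {m, j} \<subseteq> cnv t {i, m, j}"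
    by (rule cnv_mono, blast)+
  consider "chord (t i) (t m) p \<le> 0" | "chord (t m) (t j) p \<le> 0"
    | "0 < chord (t i) (t m) p" "0 < chord (t m) (t j) p" by linarith
  then show ?case
  proof cases
    case 1
    then have "region i m p" by (rule region_left[OF apex.prems(3,1) apex.hyps(1,2) apex.prems(2)])
    then have "p \<in> cnv t {i, m} \<union> (\<Union>\<rho>\<in>A. cnv t \<rho>)"
      using apex.IH(1) apex.prems(1,2) apex.hyps(2) by simp
    then show ?thesis using sides(1) by blast
  next
    case 2
    then have "region m j p" by (rule region_right[OF apex.prems(3,1) apex.hyps(1,2) apex.prems(2)])
    moreover have "1 \<le> m" using apex.prems(1) apex.hyps(1) by simp
    ultimately have "p \<in> cnv t {m, j} \<union> (\<Union>\<rho>\<in>B. cnv t \<rho>)"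
      using apex.IH(2) apex.prems(2) by simp
    then show ?thesis using sides(2) by blast
  next
    case 3
    then show ?thesis using region_triangle[OF apex.prems(3,1) apex.hyps(1,2) apex.prems(2)] by blast
  qed
qed

lemma polygon_triang_cover:
  assumes "polygon_triang P 1 n T" "3 \<le> n"
  shows "(\<Union>\<rho>\<in>T. cnv t \<rho>) = cnv t {1..n}"
proof
  show "(\<Union>\<rho>\<in>T. cnv t \<rho>) \<subseteq> cnv t {1..n}"
    using polygon_triang_subset[OF assms(1)] cnv_mono by blast
  obtain m where "{1, m, n} \<in> T" using polygon_triang_apex[OF assms(1)] assms(2) by auto
  moreover have "cnv t {1, n} \<subseteq> cnv t {1, m, n}" by (rule cnv_mono) blast
  moreover have "p \<in> cnv t {1, n} \<union> (\<Union>\<rho>\<in>T. cnv t \<rho>)" if "p \<in> cnv t {1..n}" for p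
    using polygon_triang_covers_region[OF assms(1)] region_if_mem_cnv that by simp
  ultimately show "cnv t {1..n} \<subseteq> (\<Union>\<rho>\<in>T. cnv t \<rho>)" by blast
qed

lemma polygon_triang_cnv_Int:
  assumes "polygon_triang P 1 n T" "\<rho> \<in> T" "\<sigma> \<in> T"
  shows "cnv t \<rho> \<inter> cnv t \<sigma> = cnv t (\<rho> \<inter> \<sigma>)"
proof
  have sub: "\<rho> \<subseteq> {1..n}" "\<sigma> \<subseteq> {1..n}"
    using polygon_triang_subset[OF assms(1)] assms(2,3) by auto
  consider "\<rho> = \<sigma>"
    | a b where "1 \<le> a" "a < b" "b \<le> n" "separated a b \<rho> \<sigma>"
    | a b where "1 \<le> a" "a < b" "b \<le> n" "separated a b \<sigma> \<rho>"
    using polygon_triang_separated[OF assms] by blast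
  then show "cnv t \<rho> \<inter> cnv t \<sigma> \<subseteq> cnv t (\<rho> \<inter> \<sigma>)"
  proof cases
    case 1
    then show ?thesis by simp
  next
    case 2
    then show ?thesis using cnv_Int_if_separated[OF 2 sub(2)] by blast
  next
    case 3
    then show ?thesis using cnv_Int_if_separated[OF 3 sub(1)] by (metis Int_commute)
  qed
  show "cnv t (\<rho> \<inter> \<sigma>) \<subseteq> cnv t \<rho> \<inter> cnv t \<sigma>" by (simp add: cnv_mono)
qed

lemma triangulation_if_polygon_triang:
  assumes "polygon_triang P 1 n T" "3 \<le> n"
  shows "triangulation n t T"
  unfolding triangulation_def
proof (intro conjI ballI)
  fix \<rho> assume "\<rho> \<in> T"
  then obtain a b c where \<rho>: "\<rho> = {a, b, c}" "1 \<le> a" "a < b" "b < c" "c \<le> n"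
    using polygon_triang_triangle[OF assms(1)] by blast
  then show "\<rho> \<subseteq> {1..n}" by auto
  show "card \<rho> = min n 3" using \<rho> assms(2) by simp
  have "t a < t b" "t b < t c" using \<rho> t_less_iff by auto
  then show "\<not> affine_dependent ((\<lambda>i. gamma2 (t i)) ` \<rho>)"
    using \<rho>(1) affine_independent_gamma2 by simp
qed (use polygon_triang_cover[OF assms] polygon_triang_cnv_Int[OF assms(1)] in auto)

lemma passes_below_lift:
  assumes "{a, b} \<subseteq> {1..n}" "{c, d} \<subseteq> {1..n}" "passes_below a b c d"
  shows "overlap t {c, d} {a, b}" "\<not> less3 t {c, d} {a, b}"
proof -
  have "t a < t c" "t c < t b" "t b < t d" using assms t_less_iff by (auto simp: passes_below_def)
  then obtain p where p: "p \<in> cnv t {a, b}" "p \<in> cnv t {c, d}"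
    "cubic_plane (t a) (t b) 0 p < cubic_plane (t c) (t d) 0 p"
    unfolding cnv_pair by (rule crossing_chords)
  have "{c, d} \<inter> {a, b} = {}" using assms(3) by (auto simp: passes_below_def)
  then show "overlap t {c, d} {a, b}"
    unfolding overlap_def using p(1,2) by (intro bexI[of _ p]) auto
  have "hgt t {a, b} p < hgt t {c, d} p"
    using p(3) unfolding hgt_edge[OF p(1), of 0] hgt_edge[OF p(2), of 0] .
  then show "\<not> less3 t {c, d} {a, b}" unfolding less3_def using p(1,2) by force
qed

lemma hgt_edge_le_hgt_triangle_if_not_below:
  assumes "{u, v} \<subseteq> {1..n}" "u < v" "{a, b, c} \<subseteq> {1..n}"
    and "\<forall>x\<in>{a, b, c}. \<forall>y\<in>{a, b, c}. \<not> passes_below x y u v"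
    and "p \<in> cnv t {u, v}" "p \<in> cnv t {a, b, c}"
  shows "hgt t {u, v} p \<le> hgt t {a, b, c} p"
proof -
  have "\<forall>x\<in>t ` {a, b, c}. \<forall>y\<in>t ` {a, b, c}. \<not> (x < t u \<and> t u < y \<and> y < t v)"
    using assms(1,3,4) t_less_iff by (auto simp: passes_below_def)
  moreover have "t u < t v" using assms(1,2) t_less_iff by auto
  ultimately obtain w where "\<forall>s\<in>t ` {a, b, c}. 0 \<le> (s - t u) * (s - t v) * (s - w)"
    by (metis cubic_nonneg_witness finite.emptyI finite.insertI finite_imageI)
  then have "\<forall>k\<in>{a, b, c}. 0 \<le> (t k - t u) * (t k - t v) * (t k - w)" by simp
  then show ?thesis using assms(5,6) by (rule hgt_edge_le_hgt_triangle)
qed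

lemma hgt_triangle_le_hgt_edge_if_not_above:
  assumes "{u, v} \<subseteq> {1..n}" "u < v" "{a, b, c} \<subseteq> {1..n}"
    and "\<forall>x\<in>{a, b, c}. \<forall>y\<in>{a, b, c}. \<not> passes_below u v x y"
    and "p \<in> cnv t {u, v}" "p \<in> cnv t {a, b, c}"
  shows "hgt t {a, b, c} p \<le> hgt t {u, v} p"
proof -
  have "\<forall>x\<in>t ` {a, b, c}. \<forall>y\<in>t ` {a, b, c}. \<not> (t u < x \<and> x < t v \<and> t v < y)"
    using assms(1,3,4) t_less_iff by (auto simp: passes_below_def)
  moreover have "t u < t v" using assms(1,2) t_less_iff by auto
  ultimately obtain w where "\<forall>s\<in>t ` {a, b, c}. (s - t u) * (s - t v) * (s - w) \<le> 0"
    by (metis cubic_nonpos_witness finite.emptyI finite.insertI finite_imageI)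
  then have "\<forall>k\<in>{a, b, c}. (t k - t u) * (t k - t v) * (t k - w) \<le> 0" by simp
  then show ?thesis using assms(5,6) by (rule hgt_triangle_le_hgt_edge)
qed

lemma edge_constraints_if_lifts_ordered:
  assumes edges: "\<forall>e \<in> E1 \<union> E2 \<union> E3. is_edge n e"
    and ordered: "\<And>e f. e \<in> E1 \<and> f \<in> E2 \<union> E3 \<or> e \<in> E2 \<and> f \<in> E3 \<Longrightarrow>
      less3 t e f \<or> \<not> overlap t e f"
    and E2_noncross: "\<forall>e \<in> E2. \<forall>f \<in> E2. e \<noteq> f \<longrightarrow> \<not> overlap t e f"
  shows "edge_constraints n E1 E2 E3"
proof
  have in_range: "{u, v} \<subseteq> {1..n}" if "{u, v} \<in> E1 \<union> E2 \<union> E3" for u v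
    using bspec[OF edges that] unfolding is_edge_def by (rule conjunct1)
  show "\<not> passes_below c d u v" if "{u, v} \<in> E1" "{c, d} \<in> E2 \<union> E3" for u v c d
    using ordered[of "{u, v}" "{c, d}"] passes_below_lift[of c d u v] in_range that by blast
  show "\<not> passes_below c d u v" if "{u, v} \<in> E2" "{c, d} \<in> E3" for u v c d
    using ordered[of "{u, v}" "{c, d}"] passes_below_lift[of c d u v] in_range that by blast
  have not_below_E2: "\<not> passes_below a b c d" if "{a, b} \<in> E2" "{c, d} \<in> E2" for a b c d
  proof
    assume ab_cd: "passes_below a b c d"
    have "{a, b} \<subseteq> {1..n}" "{c, d} \<subseteq> {1..n}" using in_range that by blast+
    then have "overlap t {c, d} {a, b}" using ab_cd by (rule passes_below_lift(1))
    moreover have "a \<notin> {c, d}" using ab_cd by (auto simp: passes_below_def)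
    then have "\<not> overlap t {c, d} {a, b}" using E2_noncross that by (metis insertI1)
    ultimately show False by contradiction
  qed
  show "\<not> crossing u v c d" if "{u, v} \<in> E2" "{c, d} \<in> E2" for u v c d
    unfolding crossing_def using not_below_E2[OF that] not_below_E2[OF that(2,1)] by simp
  show "e \<in> E1 \<union> E2 \<union> E3 \<Longrightarrow> is_edge n e" for e using edges by blast
qed

end

text \<open>hT picks an arbitrary triangle containing p; the height comparisons below hold for every
  such triangle, so nothing depends on the choice.\<close>
lemma hT_eq_hgt:
  assumes "triangulation n t T" "p \<in> cnv t {1..n}"
  obtains \<rho> where "\<rho> \<in> T" "p \<in> cnv t \<rho>" "hT t T p = hgt t \<rho> p"
proof -
  let ?\<rho> = "SOME \<rho>. \<rho> \<in> T \<and> p \<in> cnv t \<rho>"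
  have "(\<Union>\<rho>\<in>T. cnv t \<rho>) = cnv t {1..n}" using assms(1) by (simp add: triangulation_def)
  then have "\<exists>\<rho>. \<rho> \<in> T \<and> p \<in> cnv t \<rho>" using assms(2) by blast
  then have "?\<rho> \<in> T \<and> p \<in> cnv t ?\<rho>" by (rule someI_ex)
  moreover have "hT t T p = hgt t ?\<rho> p" by (simp add: hT_def)
  ultimately show ?thesis using that by blast
qed

section \<open>The constrained triangulation\<close>

lemma sorted_wrt_mem_pair:
  "sorted_wrt P xs \<Longrightarrow> x \<in> set xs \<Longrightarrow> y \<in> set xs \<Longrightarrow> x \<noteq> y \<Longrightarrow> P x y \<or> P y x"
  by (induction xs) auto

lemma blocks_ordered_precede:
  assumes "set es = E1 \<union> E2 \<union> E3" "E1 \<inter> E2 = {}" "E1 \<inter> E3 = {}" "E2 \<inter> E3 = {}"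
    and "\<forall>i j. i < j \<and> j < length es \<longrightarrow>
          \<not> (es ! i \<in> E2 \<and> es ! j \<in> E1) \<and>
          \<not> (es ! i \<in> E3 \<and> es ! j \<in> E1) \<and>
          \<not> (es ! i \<in> E3 \<and> es ! j \<in> E2)"
    and "\<forall>i j. i < j \<and> j < length es \<longrightarrow> R (es ! i) (es ! j)"
    and "e \<in> E1 \<and> f \<in> E2 \<union> E3 \<or> e \<in> E2 \<and> f \<in> E3"
  shows "R e f"
proof -
  let ?ordered = "\<lambda>e f. \<not> (e \<in> E2 \<and> f \<in> E1) \<and> \<not> (e \<in> E3 \<and> f \<in> E1) \<and>
    \<not> (e \<in> E3 \<and> f \<in> E2) \<and> R e f"
  have "sorted_wrt ?ordered es"
    using assms(5,6) by (simp add: sorted_wrt_iff_nth_less)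
  moreover have "e \<in> set es" "f \<in> set es" "e \<noteq> f" using assms(1-4,7) by auto
  ultimately have "?ordered e f \<or> ?ordered f e" by (rule sorted_wrt_mem_pair)
  then show ?thesis using assms(7) by blast
qed

lemma is_edgeE:
  assumes "is_edge n e"
  obtains u v where "e = {u, v}" "1 \<le> u" "u < v" "v \<le> n"
proof -
  obtain x y where xy: "e = {x, y}" "x \<noteq> y" using assms unfolding is_edge_def card_2_iff by blast
  moreover have "{x, y} \<subseteq> {1..n}" using assms xy unfolding is_edge_def by blast
  ultimately show ?thesis using that by (cases x y rule: linorder_cases) (auto simp: insert_commute)
qed

lemma triangulation_single:
  assumes "n \<le> 2"
  shows "triangulation n t {{1..n}}"
proof -
  have "{1..n} = {} \<or> {1..n} = {1} \<or> {1..n} = {1, 2 :: nat}" using assms by auto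
  then have "\<not> affine_dependent ((\<lambda>i. gamma2 (t i)) ` {1..n})" by auto
  then show ?thesis using assms unfolding triangulation_def by simp
qed

lemma hT_single:
  assumes "p \<in> cnv t \<alpha>"
  shows "hT t {\<alpha>} p = hgt t \<alpha> p"
proof -
  have "(SOME \<rho>. \<rho> \<in> {\<alpha>} \<and> p \<in> cnv t \<rho>) = \<alpha>"
    by (rule some_equality) (use assms in auto)
  then show ?thesis by (simp add: hT_def)
qed

locale constrained_triangulation = moment_curve n t + edge_constraints n E1 E2 E3
  for n t E1 E2 E3
begin

context
  fixes T
  assumes T: "polygon_triang (\<lambda>a b. \<not> blocked a b) 1 n T" and n3: "3 \<le> n"
begin

lemma triangulation_T: "triangulation n t T"
  using triangulation_if_polygon_triang[OF T n3] .

lemma triangle_containing: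
  assumes "{u, v} \<subseteq> {1..n}" "p \<in> cnv t {u, v}"
  obtains a b c where "{a, b, c} \<subseteq> {1..n}" "p \<in> cnv t {a, b, c}"
    "hT t T p = hgt t {a, b, c} p" "\<forall>x\<in>{a, b, c}. \<forall>y\<in>{a, b, c}. x < y \<longrightarrow> \<not> blocked x y"
proof -
  have "p \<in> cnv t {1..n}" using assms cnv_mono by blast
  then obtain \<rho> where \<rho>: "\<rho> \<in> T" "p \<in> cnv t \<rho>" "hT t T p = hgt t \<rho> p"
    by (rule hT_eq_hgt[OF triangulation_T])
  obtain a b c where abc: "\<rho> = {a, b, c}"
    using polygon_triang_triangle[OF T \<rho>(1)] by blast
  have "\<forall>x\<in>\<rho>. \<forall>y\<in>\<rho>. x < y \<longrightarrow> \<not> blocked x y"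
    using polygon_triang_P_edges[OF T \<rho>(1)] by blast
  moreover have "\<rho> \<subseteq> {1..n}" by (rule polygon_triang_subset[OF T \<rho>(1)])
  ultimately show ?thesis using \<rho> unfolding abc by (intro that)
qed

lemma le3_edge_tri_E1: "e \<in> E1 \<Longrightarrow> le3_edge_tri t e T"
  unfolding le3_edge_tri_def
proof
  fix p assume "e \<in> E1" "p \<in> cnv t e"
  obtain u v where uv: "e = {u, v}" "1 \<le> u" "u < v" "v \<le> n"
    using edges \<open>e \<in> E1\<close> by (blast elim: is_edgeE)
  then have "{u, v} \<subseteq> {1..n}" by auto
  then obtain a b c where abc: "{a, b, c} \<subseteq> {1..n}" "p \<in> cnv t {a, b, c}"
    "hT t T p = hgt t {a, b, c} p" "\<forall>x\<in>{a, b, c}. \<forall>y\<in>{a, b, c}. x < y \<longrightarrow> \<not> blocked x y"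
    by (rule triangle_containing) (use \<open>p \<in> cnv t e\<close> uv(1) in simp)
  have "\<forall>x\<in>{a, b, c}. \<forall>y\<in>{a, b, c}. \<not> passes_below x y u v"
    using abc(4) blocked_E1I \<open>e \<in> E1\<close> uv(1) by (fastforce simp: passes_below_def)
  then show "hgt t e p \<le> hT t T p"
    using hgt_edge_le_hgt_triangle_if_not_below abc uv \<open>p \<in> cnv t e\<close> by auto
qed

lemma le3_tri_edge_E3: "e \<in> E3 \<Longrightarrow> le3_tri_edge t T e"
  unfolding le3_tri_edge_def
proof
  fix p assume "e \<in> E3" "p \<in> cnv t e"
  obtain u v where uv: "e = {u, v}" "1 \<le> u" "u < v" "v \<le> n"
    using edges \<open>e \<in> E3\<close> by (blast elim: is_edgeE)
  then have "{u, v} \<subseteq> {1..n}" by auto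
  then obtain a b c where abc: "{a, b, c} \<subseteq> {1..n}" "p \<in> cnv t {a, b, c}"
    "hT t T p = hgt t {a, b, c} p" "\<forall>x\<in>{a, b, c}. \<forall>y\<in>{a, b, c}. x < y \<longrightarrow> \<not> blocked x y"
    by (rule triangle_containing) (use \<open>p \<in> cnv t e\<close> uv(1) in simp)
  have "\<forall>x\<in>{a, b, c}. \<forall>y\<in>{a, b, c}. \<not> passes_below u v x y"
    using abc(4) blocked_E3I \<open>e \<in> E3\<close> uv(1) by (fastforce simp: passes_below_def)
  then show "hT t T p \<le> hgt t e p"
    using hgt_triangle_le_hgt_edge_if_not_above abc uv \<open>p \<in> cnv t e\<close> by auto
qed

lemma edge_in_E2: "e \<in> E2 \<Longrightarrow> edge_in e T"
proof -
  assume "e \<in> E2"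
  then obtain u v where uv: "e = {u, v}" "1 \<le> u" "u < v" "v \<le> n"
    using edges by (blast elim: is_edgeE)
  have "\<not> crossing u v x y" if "\<rho> \<in> T" "x \<in> \<rho>" "y \<in> \<rho>" for \<rho> x y
  proof
    assume uvxy: "crossing u v x y"
    then have "x < y" by (auto simp: crossing_def passes_below_def)
    then have "\<not> blocked x y" using polygon_triang_P_edges[OF T that] by simp
    moreover have "blocked x y" using blocked_E2I uvxy \<open>e \<in> E2\<close> uv(1) by blast
    ultimately show False by contradiction
  qed
  then have "(u = 1 \<and> v = n) \<or> (\<exists>\<rho>\<in>T. {u, v} \<subseteq> \<rho>)"
    by (intro polygon_triang_contains_edge[OF T uv(2-4)]) blast
  then consider "u = 1" "v = n" | "\<exists>\<rho>\<in>T. {u, v} \<subseteq> \<rho>" by blast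
  then show ?thesis
  proof cases
    case 1
    obtain m where "{1, m, n} \<in> T" using polygon_triang_apex[OF T] n3 by auto
    then show ?thesis unfolding edge_in_def uv(1) 1 by blast
  next
    case 2
    then show ?thesis unfolding edge_in_def uv(1) .
  qed
qed

end

theorem exists_constrained_triangulation:
  "\<exists>T. triangulation n t T \<and> (\<forall>e\<in>E1. le3_edge_tri t e T) \<and> (\<forall>e\<in>E2. edge_in e T)
     \<and> (\<forall>e\<in>E3. le3_tri_edge t T e)"
proof (cases "3 \<le> n")
  case True
  then have "1 < n" by simp
  from exists_polygon_triang[OF this not_blocked_boundary]
  obtain T where T: "polygon_triang (\<lambda>a b. \<not> blocked a b) 1 n T" by blast
  show ?thesis
    using triangulation_T[OF T True] le3_edge_tri_E1[OF T True] edge_in_E2[OF T True]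
      le3_tri_edge_E3[OF T True] by blast
next
  case False
  have edge_eq: "e = {1..n}" if "e \<in> E1 \<union> E2 \<union> E3" for e
  proof -
    have "e \<subseteq> {1..n}" "card e = 2" using edges[OF that] unfolding is_edge_def by auto
    moreover have "card {1..n} \<le> card e" using False \<open>card e = 2\<close> by simp
    ultimately show ?thesis using card_seteq[of "{1..n}" e] by blast
  qed
  have "le3_edge_tri t {1..n} {{1..n}}" "edge_in {1..n} {{1..n}}" "le3_tri_edge t {{1..n}} {1..n}"
    by (simp_all add: le3_edge_tri_def le3_tri_edge_def edge_in_def hT_single)
  then show ?thesis
    using triangulation_single[of n t] False edge_eq by (intro exI[of _ "{{1..n}}"]) auto
qed

end

theorem corollary3p5:
  fixes n :: nat and t :: "nat \<Rightarrow> real"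
    and E1 E2 E3 :: "nat set set" and es :: "nat set list"
  assumes t_mono: "strict_mono_on {1..n} t"
    and edges: "\<forall>e \<in> E1 \<union> E2 \<union> E3. is_edge n e"
    and disj: "E1 \<inter> E2 = {}" "E1 \<inter> E3 = {}" "E2 \<inter> E3 = {}"
    and order_dist: "distinct es"
    and order_set: "set es = E1 \<union> E2 \<union> E3"
    and order_blocks: "\<forall>i j. i < j \<and> j < length es \<longrightarrow>
          \<not> (es ! i \<in> E2 \<and> es ! j \<in> E1) \<and>
          \<not> (es ! i \<in> E3 \<and> es ! j \<in> E1) \<and>
          \<not> (es ! i \<in> E3 \<and> es ! j \<in> E2)"
    and order_cross: "\<forall>i j. i < j \<and> j < length es \<longrightarrow>
          less3 t (es ! i) (es ! j) \<or> \<not> overlap t (es ! i) (es ! j)"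
    and E2_noncross: "\<forall>e \<in> E2. \<forall>f \<in> E2. e \<noteq> f \<longrightarrow> \<not> overlap t e f"
  shows "\<exists>T. triangulation n t T \<and>
           (\<forall>e \<in> E1. le3_edge_tri t e T) \<and>
           (\<forall>e \<in> E2. edge_in e T) \<and>
           (\<forall>e \<in> E3. le3_tri_edge t T e)"
proof -
  interpret moment_curve n t by (rule moment_curve.intro) (rule t_mono)
  have "edge_constraints n E1 E2 E3"
  proof (rule edge_constraints_if_lifts_ordered[OF edges _ E2_noncross])
    show "less3 t e f \<or> \<not> overlap t e f"
      if "e \<in> E1 \<and> f \<in> E2 \<union> E3 \<or> e \<in> E2 \<and> f \<in> E3" for e f
      using blocks_ordered_precede[OF order_set disj order_blocks order_cross that] .
  qed
  then interpret constrained_triangulation n t E1 E2 E3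
    by (simp add: constrained_triangulation_def moment_curve_axioms)
  show ?thesis by (rule exists_constrained_triangulation)
qed

end
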